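(* In the theory $\mathrm{TP}$ the following hold. (1) For every $\mathcal L$-sentence $\varphi$ and all finite sets of sentences $\Gamma,\Delta$: if $\mathrm{TP}\vdash\Gamma\Rightarrow\Delta,\mathrm P\ulcorner\varphi\urcorner$, then $\mathrm{TP}\vdash\mathrm T\ulcorner\varphi\vee\neg\varphi\urcorner,\Gamma\Rightarrow\Delta$. (2) $\mathrm{TP}$ derives the sequents $\mathrm Pt\Rightarrow\neg\mathrm P\mathrm Pt$ and $\neg\mathrm Pt\Rightarrow\neg\mathrm P\neg\mathrm Pt$, where $\mathrm P\mathrm Pt$ denotes $\mathrm P$ applied to the code of the sentence $\mathrm P\bar n$ with $n$ the value of $t$ (and likewise $\mathrm P\neg\mathrm Pt$).
   Context: Language. Let $\mathcal L_{\mathbb N}$ be the language of first-order Peano arithmetic and $\mathcal L=\mathcal L_{\mathbb N}\cup\{\mathrm T,\mathrm P\}$ with unary predicates $\mathrm T,\mathrm P$. $\mathcal L$-formulas are in Tait style: literals are $s=t$, $s\neq t$, $\mathrm Tt$, $\neg\mathrm Tt$, $\mathrm Pt$, $\neg\mathrm Pt$; formulas are built from literals by $\wedge,\vee,\forall,\exists$; negation of an arbitrary formula is defined by De Morgan dualities with $\neg\neg\varphi:=\varphi$. A standard Gödel numbering is fixed; $\ulcorner e\urcorner$ is the numeral of the code of $e$, $\dot\neg$ is the primitive recursive function sending the code of $\varphi$ to the code of $\neg\varphi$, and $\mathrm{val}(t)$ is the value of a closed term. $\Gamma\Leftrightarrow\Delta$ abbreviates the two sequents $\Gamma\Rightarrow\Delta$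 and $\Delta\Rightarrow\Gamma$. Base system. $\mathrm{PA}[\mathrm{SK}]$ is the two-sided sequent calculus for Strong Kleene logic with identity in $\mathcal L$ (initial sequents $\varphi\Rightarrow\varphi$; cut; weakening on both sides; the rule from $\Gamma\Rightarrow\Delta,\varphi$ infer $\neg\varphi,\Gamma\Rightarrow\Delta$; the usual left and right rules for $\wedge,\vee,\forall,\exists$; reflexivity $\Gamma\Rightarrow\Delta,t=t$; replacement from $\Gamma\Rightarrow\Delta,\varphi(t)$ infer $\Gamma\Rightarrow\Delta,s\neq t,\varphi(s)$), expanded by the initial sequents of Peano arithmetic and the induction rule for every $\mathcal L$-formula. A sentence is base paradoxical iff $\mathrm{PA}[\mathrm{SK}]$ derives $\varphi\Leftrightarrow\neg\mathrm T\ulcorner\varphi\urcorner$ and $\neg\varphi\Leftrightarrow\mathrm T\ulcorner\varphi\urcorner$; $B(x)$ is an $\mathcal L_{\mathbb N}$-formula defining in $\mathbb N$ the set of codes of base paradoxical sentences, and $\Pi(x):=B(x)\vee B(\dot\neg x)$. The theory TP expands $\mathrm{PA}[\mathrm{SK}]$ by the following initial sequents. In them $\varphi,\psi$ are variables ranging over codes of $\mathcal L$-sentences (in quantifier principles, $\varphi(x)$ denotes the code of the numeral instance at $x$ of a formula code with one free variable), $s,t$ range over codes of closed terms; each principle stands for the sequents with these free variables and the syntactic side conditions as antecedent hypotheses; expressions inside $\mathrm T(\cdot)$, $\mathrm P(\cdot)$ denote codes formed by the corresponding primitive recursive syntactic operations (e.g. $\mathrm T\mathrm P\varphi$ is $\mathrm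 T$ applied to the code of the sentence $\mathrm P\bar n$, $n$ the value of $\varphi$; $\neg\varphi$ inside a code is $\dot\neg\varphi$); $A$ ranges over $\{\mathrm T,\mathrm P\}$. (T1) $\mathrm{val}(s)=\mathrm{val}(t)\Leftrightarrow\mathrm T(s\dot=t)$, $\mathrm{val}(s)\neq\mathrm{val}(t)\Leftrightarrow\mathrm T(s\dot\neq t)$; (T2) $\mathrm P\varphi\Leftrightarrow\mathrm T\mathrm P\varphi$, $\neg\mathrm P\varphi\Leftrightarrow\mathrm T\neg\mathrm P\varphi$; (T3) $\mathrm T\varphi\Leftrightarrow\mathrm T\mathrm T\varphi$, $\mathrm T\neg\varphi\Leftrightarrow\neg\mathrm T\varphi$; (T4) $\mathrm T\varphi\wedge\mathrm T\psi\Leftrightarrow\mathrm T(\varphi\wedge\psi)$, $\mathrm T\varphi\vee\mathrm T\psi\Leftrightarrow\mathrm T(\varphi\vee\psi)$; (T5) $\forall x\mathrm T\varphi(x)\Leftrightarrow\mathrm T\forall x\varphi(x)$, $\exists x\mathrm T\varphi(x)\Leftrightarrow\mathrm T\exists x\varphi(x)$; (P1) $\Pi(\varphi)\Rightarrow\mathrm P\varphi$; (P2) $\mathrm P\neg A\varphi\Leftrightarrow\mathrm PA\varphi$; (P3) $\mathrm P\mathrm T\varphi\Leftrightarrow\mathrm P\varphi\vee\Pi(\mathrm T\varphi)$; (P4) $\mathrm P(\varphi\wedge\psi)\Leftrightarrow(\mathrm P\varphi\wedge\mathrm P\psi)\vee(\mathrm T\varphi\wedge\mathrm P\psi)\vee(\mathrm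 T\psi\wedge\mathrm P\varphi)\vee\Pi(\varphi\wedge\psi)$; (P5) $\mathrm P(\varphi\vee\psi)\Leftrightarrow(\mathrm P\varphi\wedge\mathrm P\psi)\vee(\neg\mathrm T\varphi\wedge\mathrm P\psi)\vee(\neg\mathrm T\psi\wedge\mathrm P\varphi)\vee\Pi(\varphi\vee\psi)$; (P6) $\mathrm P\forall x\varphi(x)\Leftrightarrow(\exists x\mathrm P\varphi(x)\wedge\forall y(\mathrm P\varphi(y)\vee\mathrm T\varphi(y)))\vee\Pi(\forall x\varphi(x))$; (P7) $\mathrm P\exists x\varphi(x)\Leftrightarrow(\exists x\mathrm P\varphi(x)\wedge\forall y(\mathrm P\varphi(y)\vee\neg\mathrm T\varphi(y)))\vee\Pi(\exists x\varphi(x))$; (I1) $\mathrm T(\varphi\vee\neg\varphi)\Rightarrow\neg\mathrm P\varphi$. *)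

theory Defs
  imports Main "HOL-Library.Nat_Bijection"
begin

section \<open>Syntax of the language L = L_N + {T, P}\<close>

text \<open>Function symbols of L_N: codes of primitive recursive functions
  (zero, successor, projections, composition, primitive recursion).
  0, S, +, x are particular such symbols.\<close>
datatype pfun = PZ | PS | PProj nat | PComp pfun "pfun list" | PRec pfun pfun

datatype trm = V nat | Fn pfun "trm list"

text \<open>Tait-style formulas: literals and \<and>, \<or>, \<forall>, \<exists>.\<close>
datatype fml =
    FEq trm trm | FNeq trm trm | FT trm | FNT trm | FP trm | FNP trm
  | FAnd fml fml | FOr fml fml | FAll nat fml | FEx nat fml

fun neg :: "fml \<Rightarrow> fml" where
  "neg (FEq s t) = FNeq s t"
| "neg (FNeq s t) = FEq s t"
| "neg (FT t) = FNT t"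
| "neg (FNT t) = FT t"
| "neg (FP t) = FNP t"
| "neg (FNP t) = FP t"
| "neg (FAnd a b) = FOr (neg a) (neg b)"
| "neg (FOr a b) = FAnd (neg a) (neg b)"
| "neg (FAll x a) = FEx x (neg a)"
| "neg (FEx x a) = FAll x (neg a)"

fun fvt :: "trm \<Rightarrow> nat set" where
  "fvt (V n) = {n}"
| "fvt (Fn f ts) = (\<Union>t\<in>set ts. fvt t)"

fun fv :: "fml \<Rightarrow> nat set" where
  "fv (FEq s t) = fvt s \<union> fvt t"
| "fv (FNeq s t) = fvt s \<union> fvt t"
| "fv (FT t) = fvt t"
| "fv (FNT t) = fvt t"
| "fv (FP t) = fvt t"
| "fv (FNP t) = fvt t"
| "fv (FAnd a b) = fv a \<union> fv b"
| "fv (FOr a b) = fv a \<union> fv b"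
| "fv (FAll x a) = fv a - {x}"
| "fv (FEx x a) = fv a - {x}"

definition fvs :: "fml set \<Rightarrow> nat set" where
  "fvs G = (\<Union>a\<in>G. fv a)"

definition sentence :: "fml \<Rightarrow> bool" where
  "sentence a \<longleftrightarrow> fv a = {}"

definition fresh :: "nat set \<Rightarrow> nat" where
  "fresh S = (LEAST n. n \<notin> S)"

fun substt :: "(nat \<Rightarrow> trm) \<Rightarrow> trm \<Rightarrow> trm" where
  "substt \<sigma> (V n) = \<sigma> n"
| "substt \<sigma> (Fn f ts) = Fn f (map (substt \<sigma>) ts)"

text \<open>Capture-avoiding simultaneous substitution (bound variables are renamed
  only when capture would occur).\<close>
fun substf :: "(nat \<Rightarrow> trm) \<Rightarrow> fml \<Rightarrow> fml" where
  "substf \<sigma> (FEq s t) = FEq (substt \<sigma> s) (substt \<sigma> t)"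
| "substf \<sigma> (FNeq s t) = FNeq (substt \<sigma> s) (substt \<sigma> t)"
| "substf \<sigma> (FT t) = FT (substt \<sigma> t)"
| "substf \<sigma> (FNT t) = FNT (substt \<sigma> t)"
| "substf \<sigma> (FP t) = FP (substt \<sigma> t)"
| "substf \<sigma> (FNP t) = FNP (substt \<sigma> t)"
| "substf \<sigma> (FAnd a b) = FAnd (substf \<sigma> a) (substf \<sigma> b)"
| "substf \<sigma> (FOr a b) = FOr (substf \<sigma> a) (substf \<sigma> b)"
| "substf \<sigma> (FAll x a) =
     (let W = (\<Union>y\<in>fv (FAll x a). fvt (\<sigma> y));
          z = (if x \<in> W then fresh (W \<union> fv a) else x)
      in FAll z (substf (\<sigma>(x := V z)) a))"
| "substf \<sigma> (FEx x a) =
     (let W = (\<Union>y\<in>fv (FEx x a). fvt (\<sigma> y));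
          z = (if x \<in> W then fresh (W \<union> fv a) else x)
      in FEx z (substf (\<sigma>(x := V z)) a))"

definition inst1 :: "nat \<Rightarrow> trm \<Rightarrow> fml \<Rightarrow> fml" where
  "inst1 x t a = substf (V(x := t)) a"

definition zero :: trm where "zero = Fn PZ []"
definition succ :: "trm \<Rightarrow> trm" where "succ t = Fn PS [t]"

primrec num :: "nat \<Rightarrow> trm" where
  "num 0 = zero"
| "num (Suc n) = succ (num n)"

section \<open>Standard semantics\<close>

fun eval_pfun :: "pfun \<Rightarrow> nat list \<Rightarrow> nat" where
  "eval_pfun PZ xs = 0"
| "eval_pfun PS xs = Suc (case xs of [] \<Rightarrow> 0 | x # _ \<Rightarrow> x)"
| "eval_pfun (PProj i) xs = (if i < length xs then xs ! i else 0)"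
| "eval_pfun (PComp f gs) xs = eval_pfun f (map (\<lambda>g. eval_pfun g xs) gs)"
| "eval_pfun (PRec f g) xs = (case xs of [] \<Rightarrow> eval_pfun f []
     | y # ys \<Rightarrow> rec_nat (eval_pfun f ys) (\<lambda>k r. eval_pfun g (r # k # ys)) y)"

fun evalt :: "(nat \<Rightarrow> nat) \<Rightarrow> trm \<Rightarrow> nat" where
  "evalt e (V n) = e n"
| "evalt e (Fn f ts) = eval_pfun f (map (evalt e) ts)"

fun sat :: "nat set \<Rightarrow> nat set \<Rightarrow> (nat \<Rightarrow> nat) \<Rightarrow> fml \<Rightarrow> bool" where
  "sat T P e (FEq s t) = (evalt e s = evalt e t)"
| "sat T P e (FNeq s t) = (evalt e s \<noteq> evalt e t)"
| "sat T P e (FT t) = (evalt e t \<in> T)"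
| "sat T P e (FNT t) = (evalt e t \<notin> T)"
| "sat T P e (FP t) = (evalt e t \<in> P)"
| "sat T P e (FNP t) = (evalt e t \<notin> P)"
| "sat T P e (FAnd a b) = (sat T P e a \<and> sat T P e b)"
| "sat T P e (FOr a b) = (sat T P e a \<or> sat T P e b)"
| "sat T P e (FAll x a) = (\<forall>n. sat T P (e(x := n)) a)"
| "sat T P e (FEx x a) = (\<exists>n. sat T P (e(x := n)) a)"

fun is_LN :: "fml \<Rightarrow> bool" where
  "is_LN (FEq s t) = True"
| "is_LN (FNeq s t) = True"
| "is_LN (FT t) = False"
| "is_LN (FNT t) = False"
| "is_LN (FP t) = False"
| "is_LN (FNP t) = False"
| "is_LN (FAnd a b) = (is_LN a \<and> is_LN b)"
| "is_LN (FOr a b) = (is_LN a \<and> is_LN b)"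
| "is_LN (FAll x a) = is_LN a"
| "is_LN (FEx x a) = is_LN a"

section \<open>A standard Goedel numbering\<close>

fun code_pfun :: "pfun \<Rightarrow> nat" where
  "code_pfun PZ = prod_encode (0, 0)"
| "code_pfun PS = prod_encode (1, 0)"
| "code_pfun (PProj i) = prod_encode (2, i)"
| "code_pfun (PComp f gs) = prod_encode (3, prod_encode (code_pfun f, list_encode (map code_pfun gs)))"
| "code_pfun (PRec f g) = prod_encode (4, prod_encode (code_pfun f, code_pfun g))"

fun code_trm :: "trm \<Rightarrow> nat" where
  "code_trm (V n) = prod_encode (0, n)"
| "code_trm (Fn f ts) = prod_encode (1, prod_encode (code_pfun f, list_encode (map code_trm ts)))"

fun code_fml :: "fml \<Rightarrow> nat" where
  "code_fml (FEq s t) = prod_encode (0, prod_encode (code_trm s, code_trm t))"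
| "code_fml (FNeq s t) = prod_encode (1, prod_encode (code_trm s, code_trm t))"
| "code_fml (FT t) = prod_encode (2, code_trm t)"
| "code_fml (FNT t) = prod_encode (3, code_trm t)"
| "code_fml (FP t) = prod_encode (4, code_trm t)"
| "code_fml (FNP t) = prod_encode (5, code_trm t)"
| "code_fml (FAnd a b) = prod_encode (6, prod_encode (code_fml a, code_fml b))"
| "code_fml (FOr a b) = prod_encode (7, prod_encode (code_fml a, code_fml b))"
| "code_fml (FAll x a) = prod_encode (8, prod_encode (x, code_fml a))"
| "code_fml (FEx x a) = prod_encode (9, prod_encode (x, code_fml a))"

definition quote :: "fml \<Rightarrow> trm" where
  "quote a = num (code_fml a)"

definition is_fcode :: "nat \<Rightarrow> bool" where "is_fcode n \<longleftrightarrow> n \<in> range code_fml"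
definition is_tcode :: "nat \<Rightarrow> bool" where "is_tcode n \<longleftrightarrow> n \<in> range code_trm"
definition dec_f :: "nat \<Rightarrow> fml" where "dec_f n = inv code_fml n"
definition dec_t :: "nat \<Rightarrow> trm" where "dec_t n = inv code_trm n"

definition one_free :: "nat \<Rightarrow> bool" where
  "one_free n \<longleftrightarrow> is_fcode n \<and> (\<exists>v. fv (dec_f n) = {v})"

section \<open>The syntactic operations on codes (as functions on \<nat>)\<close>

definition negF :: "nat \<Rightarrow> nat" where
  "negF n = (if is_fcode n then code_fml (neg (dec_f n)) else 0)"
definition conjF :: "nat \<Rightarrow> nat \<Rightarrow> nat" where
  "conjF m n = (if is_fcode m \<and> is_fcode n then code_fml (FAnd (dec_f m) (dec_f n)) else 0)"
definition disjF :: "nat \<Rightarrow> nat \<Rightarrow> nat" where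
  "disjF m n = (if is_fcode m \<and> is_fcode n then code_fml (FOr (dec_f m) (dec_f n)) else 0)"
definition eqF :: "nat \<Rightarrow> nat \<Rightarrow> nat" where
  "eqF m n = (if is_tcode m \<and> is_tcode n then code_fml (FEq (dec_t m) (dec_t n)) else 0)"
definition neqF :: "nat \<Rightarrow> nat \<Rightarrow> nat" where
  "neqF m n = (if is_tcode m \<and> is_tcode n then code_fml (FNeq (dec_t m) (dec_t n)) else 0)"
definition TF :: "nat \<Rightarrow> nat" where "TF n = code_fml (FT (num n))"
definition PF :: "nat \<Rightarrow> nat" where "PF n = code_fml (FP (num n))"
definition allF :: "nat \<Rightarrow> nat" where
  "allF n = (if one_free n then code_fml (FAll (the_elem (fv (dec_f n))) (dec_f n)) else 0)"
definition exF :: "nat \<Rightarrow> nat" where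
  "exF n = (if one_free n then code_fml (FEx (the_elem (fv (dec_f n))) (dec_f n)) else 0)"
definition instF :: "nat \<Rightarrow> nat \<Rightarrow> nat" where
  "instF n m = (if one_free n then code_fml (inst1 (the_elem (fv (dec_f n))) (num m) (dec_f n)) else 0)"
definition sentF :: "nat \<Rightarrow> nat" where
  "sentF n = (if is_fcode n \<and> sentence (dec_f n) then 1 else 0)"
definition fml1F :: "nat \<Rightarrow> nat" where
  "fml1F n = (if one_free n then 1 else 0)"
definition cltermF :: "nat \<Rightarrow> nat" where
  "cltermF n = (if is_tcode n \<and> fvt (dec_t n) = {} then 1 else 0)"

text \<open>The function symbols of L_N used to express the syntactic operations.
  Any choice of primitive recursive function symbols computing the intended
  operations is admitted.\<close>
record coding =
  c_neg :: pfun  c_conj :: pfun  c_disj :: pfun  c_eq :: pfun  c_neq :: pfun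
  c_T :: pfun  c_P :: pfun  c_all :: pfun  c_ex :: pfun  c_inst :: pfun
  c_sent :: pfun  c_fml1 :: pfun  c_clterm :: pfun

definition good_coding :: "coding \<Rightarrow> bool" where
  "good_coding C \<longleftrightarrow>
     (\<forall>n. eval_pfun (c_neg C) [n] = negF n) \<and>
     (\<forall>m n. eval_pfun (c_conj C) [m, n] = conjF m n) \<and>
     (\<forall>m n. eval_pfun (c_disj C) [m, n] = disjF m n) \<and>
     (\<forall>m n. eval_pfun (c_eq C) [m, n] = eqF m n) \<and>
     (\<forall>m n. eval_pfun (c_neq C) [m, n] = neqF m n) \<and>
     (\<forall>n. eval_pfun (c_T C) [n] = TF n) \<and>
     (\<forall>n. eval_pfun (c_P C) [n] = PF n) \<and>
     (\<forall>n. eval_pfun (c_all C) [n] = allF n) \<and>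
     (\<forall>n. eval_pfun (c_ex C) [n] = exF n) \<and>
     (\<forall>m n. eval_pfun (c_inst C) [m, n] = instF m n) \<and>
     (\<forall>n. eval_pfun (c_sent C) [n] = sentF n) \<and>
     (\<forall>n. eval_pfun (c_fml1 C) [n] = fml1F n) \<and>
     (\<forall>n. eval_pfun (c_clterm C) [n] = cltermF n)"

section \<open>The sequent calculus (Strong Kleene, with identity and induction)\<close>

text \<open>Sequents are pairs of finite sets of formulas; \<open>Ax\<close> is a set of extra
  initial sequents.\<close>
inductive deriv :: "(fml set \<times> fml set) set \<Rightarrow> fml set \<Rightarrow> fml set \<Rightarrow> bool"
  for Ax :: "(fml set \<times> fml set) set" where
  ax: "(G, D) \<in> Ax \<Longrightarrow> finite G \<Longrightarrow> finite D \<Longrightarrow> deriv Ax G D"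
| init: "deriv Ax {a} {a}"
| weak: "deriv Ax G D \<Longrightarrow> G \<subseteq> G' \<Longrightarrow> D \<subseteq> D' \<Longrightarrow> finite G' \<Longrightarrow> finite D'
          \<Longrightarrow> deriv Ax G' D'"
| cut: "deriv Ax G (insert a D) \<Longrightarrow> deriv Ax (insert a G) D \<Longrightarrow> deriv Ax G D"
| negL: "deriv Ax G (insert a D) \<Longrightarrow> deriv Ax (insert (neg a) G) D"
| andL1: "deriv Ax (insert a G) D \<Longrightarrow> deriv Ax (insert (FAnd a b) G) D"
| andL2: "deriv Ax (insert b G) D \<Longrightarrow> deriv Ax (insert (FAnd a b) G) D"
| andR: "deriv Ax G (insert a D) \<Longrightarrow> deriv Ax G (insert b D)
          \<Longrightarrow> deriv Ax G (insert (FAnd a b) D)"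
| orL: "deriv Ax (insert a G) D \<Longrightarrow> deriv Ax (insert b G) D
          \<Longrightarrow> deriv Ax (insert (FOr a b) G) D"
| orR1: "deriv Ax G (insert a D) \<Longrightarrow> deriv Ax G (insert (FOr a b) D)"
| orR2: "deriv Ax G (insert b D) \<Longrightarrow> deriv Ax G (insert (FOr a b) D)"
| allL: "deriv Ax (insert (inst1 x t a) G) D \<Longrightarrow> deriv Ax (insert (FAll x a) G) D"
| allR: "deriv Ax G (insert (inst1 x (V y) a) D) \<Longrightarrow> y \<notin> fvs G \<union> fvs D \<union> fv (FAll x a)
          \<Longrightarrow> deriv Ax G (insert (FAll x a) D)"
| exL: "deriv Ax (insert (inst1 x (V y) a) G) D \<Longrightarrow> y \<notin> fvs G \<union> fvs D \<union> fv (FEx x a)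
          \<Longrightarrow> deriv Ax (insert (FEx x a) G) D"
| exR: "deriv Ax G (insert (inst1 x t a) D) \<Longrightarrow> deriv Ax G (insert (FEx x a) D)"
| refl: "finite G \<Longrightarrow> finite D \<Longrightarrow> deriv Ax G (insert (FEq t t) D)"
| repl: "deriv Ax G (insert (inst1 x t a) D)
          \<Longrightarrow> deriv Ax G (insert (FNeq s t) (insert (inst1 x s a) D))"
| ind: "deriv Ax G (insert (inst1 x zero a) D)
        \<Longrightarrow> deriv Ax (insert (inst1 x (V y) a) G) (insert (inst1 x (succ (V y)) a) D)
        \<Longrightarrow> y \<notin> fvs G \<union> fvs D \<union> fv (FAll x a)
        \<Longrightarrow> deriv Ax G (insert (inst1 x t a) D)"

text \<open>Initial sequents of Peano arithmetic: successor axioms and the defining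
  equations of the primitive recursive function symbols (all instances).\<close>
definition PAax :: "(fml set \<times> fml set) set" where
  "PAax =
     {({}, {FEq (Fn PZ ts) zero}) | ts. True}
   \<union> {({}, {FEq (Fn PS (t # u # ts)) (succ t)}) | t u ts. True}
   \<union> {({}, {FEq (Fn PS []) (succ zero)})}
   \<union> {({FEq (succ t) zero}, {}) | t. True}
   \<union> {({FEq (succ s) (succ t)}, {FEq s t}) | s t. True}
   \<union> {({}, {FEq (Fn (PProj i) ts) (if i < length ts then ts ! i else zero)}) | i ts. True}
   \<union> {({}, {FEq (Fn (PComp f gs) ts) (Fn f (map (\<lambda>g. Fn g ts) gs))}) | f gs ts. True}
   \<union> {({}, {FEq (Fn (PRec f g) []) (Fn f [])}) | f g. True}
   \<union> {({}, {FEq (Fn (PRec f g) (zero # ts)) (Fn f ts)}) | f g ts. True}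
   \<union> {({}, {FEq (Fn (PRec f g) (succ t # ts)) (Fn g (Fn (PRec f g) (t # ts) # t # ts))})
       | f g t ts. True}"

abbreviation PASK :: "fml set \<Rightarrow> fml set \<Rightarrow> bool" where
  "PASK \<equiv> deriv PAax"

section \<open>Base paradoxicality\<close>

definition base_paradoxical :: "fml \<Rightarrow> bool" where
  "base_paradoxical a \<longleftrightarrow> sentence a \<and>
     PASK {a} {FNT (quote a)} \<and> PASK {FNT (quote a)} {a} \<and>
     PASK {neg a} {FT (quote a)} \<and> PASK {FT (quote a)} {neg a}"

definition defines_BP :: "fml \<Rightarrow> bool" where
  "defines_BP B \<longleftrightarrow> is_LN B \<and> fv B \<subseteq> {0} \<and>
     (\<forall>n. sat {} {} (\<lambda>_. n) B \<longleftrightarrow> n \<in> code_fml ` {a. base_paradoxical a})"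

definition defines_val :: "fml \<Rightarrow> bool" where
  "defines_val Vl \<longleftrightarrow> is_LN Vl \<and> fv Vl \<subseteq> {0, 1} \<and>
     (\<forall>n m. sat {} {} ((\<lambda>_. 0)(0 := n, 1 := m)) Vl \<longleftrightarrow>
        (is_tcode n \<and> fvt (dec_t n) = {} \<and> m = evalt (\<lambda>_. 0) (dec_t n)))"

section \<open>The theory TP\<close>

definition iffs :: "fml set \<Rightarrow> fml \<Rightarrow> fml \<Rightarrow> (fml set \<times> fml set) set" where
  "iffs H a b = {(insert a H, {b}), (insert b H, {a})}"

text \<open>The instances of the principles of TP for terms a (= \<phi> or s), b (= \<psi> or t)
  and bound variables z, w not occurring in a, b.\<close>
definition tp_inst :: "coding \<Rightarrow> fml \<Rightarrow> fml \<Rightarrow> trm \<Rightarrow> trm \<Rightarrow> nat \<Rightarrow> nat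
     \<Rightarrow> (fml set \<times> fml set) set" where
  "tp_inst C Vl B a b z w = (let
     Sent = (\<lambda>u. FEq (Fn (c_sent C) [u]) (num 1));
     CT = (\<lambda>u. FEq (Fn (c_clterm C) [u]) (num 1));
     F1 = (\<lambda>u. FEq (Fn (c_fml1 C) [u]) (num 1));
     ng = (\<lambda>u. Fn (c_neg C) [u]);
     Tc = (\<lambda>u. Fn (c_T C) [u]);
     Pc = (\<lambda>u. Fn (c_P C) [u]);
     cj = (\<lambda>u v. Fn (c_conj C) [u, v]);
     dj = (\<lambda>u v. Fn (c_disj C) [u, v]);
     eqc = (\<lambda>u v. Fn (c_eq C) [u, v]);
     neqc = (\<lambda>u v. Fn (c_neq C) [u, v]);
     alc = (\<lambda>u. Fn (c_all C) [u]);
     exc = (\<lambda>u. Fn (c_ex C) [u]);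
     ins = (\<lambda>u v. Fn (c_inst C) [u, v]);
     Pi = (\<lambda>u. FOr (inst1 0 u B) (inst1 0 (ng u) B));
     Vl2 = (\<lambda>u v. substf (V(0 := u, 1 := v)) Vl)
   in
     \<comment> \<open>T1\<close>
     iffs {CT a, CT b} (FEx z (FAnd (Vl2 a (V z)) (Vl2 b (V z)))) (FT (eqc a b))
   \<union> iffs {CT a, CT b}
       (FEx z (FEx w (FAnd (Vl2 a (V z)) (FAnd (Vl2 b (V w)) (FNeq (V z) (V w))))))
       (FT (neqc a b))
     \<comment> \<open>T2\<close>
   \<union> iffs {Sent a} (FP a) (FT (Pc a))
   \<union> iffs {Sent a} (FNP a) (FT (ng (Pc a)))
     \<comment> \<open>T3\<close>
   \<union> iffs {Sent a} (FT a) (FT (Tc a))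
   \<union> iffs {Sent a} (FT (ng a)) (FNT a)
     \<comment> \<open>T4\<close>
   \<union> iffs {Sent a, Sent b} (FAnd (FT a) (FT b)) (FT (cj a b))
   \<union> iffs {Sent a, Sent b} (FOr (FT a) (FT b)) (FT (dj a b))
     \<comment> \<open>T5\<close>
   \<union> iffs {F1 a} (FAll z (FT (ins a (V z)))) (FT (alc a))
   \<union> iffs {F1 a} (FEx z (FT (ins a (V z)))) (FT (exc a))
     \<comment> \<open>P1\<close>
   \<union> {({Sent a, Pi a}, {FP a})}
     \<comment> \<open>P2\<close>
   \<union> iffs {Sent a} (FP (ng (Tc a))) (FP (Tc a))
   \<union> iffs {Sent a} (FP (ng (Pc a))) (FP (Pc a))
     \<comment> \<open>P3\<close>
   \<union> iffs {Sent a} (FP (Tc a)) (FOr (FP a) (Pi (Tc a)))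
     \<comment> \<open>P4\<close>
   \<union> iffs {Sent a, Sent b} (FP (cj a b))
       (FOr (FAnd (FP a) (FP b)) (FOr (FAnd (FT a) (FP b))
          (FOr (FAnd (FT b) (FP a)) (Pi (cj a b)))))
     \<comment> \<open>P5\<close>
   \<union> iffs {Sent a, Sent b} (FP (dj a b))
       (FOr (FAnd (FP a) (FP b)) (FOr (FAnd (FNT a) (FP b))
          (FOr (FAnd (FNT b) (FP a)) (Pi (dj a b)))))
     \<comment> \<open>P6\<close>
   \<union> iffs {F1 a} (FP (alc a))
       (FOr (FAnd (FEx z (FP (ins a (V z))))
                  (FAll z (FOr (FP (ins a (V z))) (FT (ins a (V z))))))
            (Pi (alc a)))
     \<comment> \<open>P7\<close>
   \<union> iffs {F1 a} (FP (exc a))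
       (FOr (FAnd (FEx z (FP (ins a (V z))))
                  (FAll z (FOr (FP (ins a (V z))) (FNT (ins a (V z))))))
            (Pi (exc a)))
     \<comment> \<open>I1\<close>
   \<union> {({Sent a, FT (dj a (ng a))}, {FNP a})})"

definition TPax :: "coding \<Rightarrow> fml \<Rightarrow> fml \<Rightarrow> (fml set \<times> fml set) set" where
  "TPax C Vl B = (\<Union> {tp_inst C Vl B a b z w | a b z w.
       z \<noteq> w \<and> z \<notin> fvt a \<union> fvt b \<and> w \<notin> fvt a \<union> fvt b})"

abbreviation TP :: "coding \<Rightarrow> fml \<Rightarrow> fml \<Rightarrow> fml set \<Rightarrow> fml set \<Rightarrow> bool" where
  "TP C Vl B \<equiv> deriv (PAax \<union> TPax C Vl B)"

end

theory Submission
  imports Defs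
begin

(* Both parts rest on the initial sequent I1, T(phi or not phi) => not P(phi).
   For (1), the P(phi) on the right of a derivable sequent moves to the left as
   not P(phi), where it is cut against I1.  For (2), T2 turns P t into T(P t), T4
   weakens this to T(P t or not P t), and I1 gives not P(P t); likewise for not P t.
   The axioms of TP build codes with the function symbols of the coding rather
   than with numerals, so truth ascriptions have to be transported along the
   equations between closed terms with equal values, all of which PA proves. *)

lemma map_eq_map_imp_eq:
  "(\<And>x y. x \<in> set xs \<Longrightarrow> f x = f y \<Longrightarrow> x = y) \<Longrightarrow> map f xs = map f ys \<Longrightarrow> xs = ys"
proof (induction xs arbitrary: ys)
  case Nil
  then show ?case by simp
next
  case (Cons a xs)
  then show ?case by (cases ys) auto
qed

lemma code_pfun_eqD: "code_pfun f = code_pfun g \<Longrightarrow> f = g"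
  by (induction f arbitrary: g; case_tac g) (auto simp: list_encode_eq intro: map_eq_map_imp_eq)

lemma code_trm_eqD: "code_trm s = code_trm t \<Longrightarrow> s = t"
  by (induction s arbitrary: t; case_tac t)
    (auto simp: list_encode_eq intro: map_eq_map_imp_eq dest: code_pfun_eqD)

lemma inj_code_fml: "inj code_fml"
proof (rule injI)
  show "code_fml a = code_fml b \<Longrightarrow> a = b" for a b
    by (induction a arbitrary: b; case_tac b) (auto dest: code_trm_eqD)
qed

lemma dec_f_code_fml [simp]: "dec_f (code_fml a) = a"
  by (simp add: dec_f_def inj_code_fml)

lemma is_fcode_code_fml [simp]: "is_fcode (code_fml a)"
  by (simp add: is_fcode_def)

lemma negF_code_fml [simp]: "negF (code_fml a) = code_fml (neg a)"
  by (simp add: negF_def del: code_fml.simps)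

lemma disjF_code_fml [simp]: "disjF (code_fml a) (code_fml b) = code_fml (FOr a b)"
  by (simp add: disjF_def del: code_fml.simps)

lemma fv_neg [simp]: "fv (neg a) = fv a"
  by (induction a) auto

lemma fvt_num [simp]: "fvt (num n) = {}"
  by (induction n) (auto simp: zero_def succ_def)

lemma evalt_num [simp]: "evalt e (num n) = n"
  by (induction n) (auto simp: zero_def succ_def)

lemma fvt_quote [simp]: "fvt (quote a) = {}"
  by (simp add: quote_def)

lemma evalt_quote [simp]: "evalt e (quote a) = code_fml a"
  by (simp add: quote_def)

lemma finite_fvt: "finite (fvt t)"
  by (induction t) auto

lemma ex_notin_fvt: "\<exists>x. x \<notin> fvt t"
  using ex_new_if_finite[OF infinite_UNIV_nat finite_fvt] by blast

lemma substt_upd_notin [simp]: "x \<notin> fvt u \<Longrightarrow> substt (V(x := s)) u = u"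
  by (induction u) (auto intro: map_idI)

lemma deriv_finite: "deriv Ax G D \<Longrightarrow> finite G \<and> finite D"
  by (induction rule: deriv.induct) auto

lemma deriv_cut_subset:
  assumes "deriv Ax G1 {a}" and "deriv Ax (insert a G2) D"
    and "G1 \<subseteq> G" and "G2 \<subseteq> G" and "finite G"
  shows "deriv Ax G D"
proof (rule deriv.cut)
  have "finite D" using deriv_finite[OF assms(2)] by simp
  show "deriv Ax G (insert a D)"
    by (rule deriv.weak[OF assms(1) assms(3)]) (use assms(5) \<open>finite D\<close> in auto)
  show "deriv Ax (insert a G) D"
    by (rule deriv.weak[OF assms(2)]) (use assms(4,5) \<open>finite D\<close> in auto)
qed

lemma deriv_cut_valid:
  assumes "deriv Ax {} {a}" and "deriv Ax (insert a G) D"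
  shows "deriv Ax G D"
  by (rule deriv_cut_subset[OF assms]) (use deriv_finite[OF assms(2)] in auto)

lemma deriv_trans:
  assumes "deriv Ax G {a}" and "deriv Ax {a} {b}"
  shows "deriv Ax G {b}"
  by (rule deriv_cut_subset[OF assms(1), of "{}"]) (use assms deriv_finite[OF assms(1)] in auto)

definition provable_eq :: "(fml set \<times> fml set) set \<Rightarrow> trm \<Rightarrow> trm \<Rightarrow> bool" where
  "provable_eq Ax s t \<longleftrightarrow> deriv Ax {} {FEq s t}"

lemma provable_eq_refl: "provable_eq Ax t t"
  using deriv.refl[of "{}" "{}" Ax t] by (simp add: provable_eq_def)

lemma deriv_replace:
  assumes "deriv Ax G (insert (inst1 x u a) D)" and "provable_eq Ax s u"
  shows "deriv Ax G (insert (inst1 x s a) D)"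
proof (rule deriv_cut_valid)
  show "deriv Ax {} {FEq s u}" using assms(2) by (simp add: provable_eq_def)
  from assms(1) have "deriv Ax (insert (neg (FNeq s u)) G) (insert (inst1 x s a) D)"
    by (intro deriv.negL deriv.repl)
  then show "deriv Ax (insert (FEq s u) G) (insert (inst1 x s a) D)" by simp
qed

lemma provable_eq_sym:
  assumes "provable_eq Ax s t"
  shows "provable_eq Ax t s"
proof -
  obtain x where x: "x \<notin> fvt t" using ex_notin_fvt by blast
  have "deriv Ax {} {inst1 x s (FEq t (V x))}"
    by (rule deriv_replace[OF _ assms, where D = "{}", simplified])
      (use provable_eq_refl[of Ax t] x in \<open>simp add: provable_eq_def inst1_def\<close>)
  with x show ?thesis by (simp add: provable_eq_def inst1_def)
qed

lemma provable_eq_trans [trans]: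
  assumes "provable_eq Ax s t" and "provable_eq Ax t u"
  shows "provable_eq Ax s u"
proof -
  obtain x where x: "x \<notin> fvt u" using ex_notin_fvt by blast
  have "deriv Ax {} {inst1 x s (FEq (V x) u)}"
    by (rule deriv_replace[OF _ assms(1), where D = "{}", simplified])
      (use assms(2) x in \<open>simp add: provable_eq_def inst1_def\<close>)
  with x show ?thesis by (simp add: provable_eq_def inst1_def)
qed

lemma provable_eq_Fn_cong_append:
  "list_all2 (provable_eq Ax) ts us \<Longrightarrow> provable_eq Ax (Fn f (pre @ ts)) (Fn f (pre @ us))"
proof (induction ts us arbitrary: pre rule: list_all2_induct)
  case Nil
  show ?case by (rule provable_eq_refl)
next
  case (Cons t ts u us)
  let ?l = "Fn f (pre @ t # ts)"
  obtain x where x: "x \<notin> fvt ?l" using ex_notin_fvt by blast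
  then have fix_pre_ts: "map (substt (V(x := v))) pre = pre" "map (substt (V(x := v))) ts = ts" for v
    by (auto intro: map_idI)
  have "deriv Ax {} {inst1 x u (FEq ?l (Fn f (pre @ V x # ts)))}"
    by (rule deriv_replace[OF _ provable_eq_sym[OF Cons.hyps(1)], where D = "{}", simplified])
      (use provable_eq_refl[of Ax ?l] x in \<open>simp add: provable_eq_def inst1_def fix_pre_ts\<close>)
  then have "provable_eq Ax ?l (Fn f ((pre @ [u]) @ ts))"
    using x by (simp add: provable_eq_def inst1_def fix_pre_ts)
  also have "provable_eq Ax \<dots> (Fn f ((pre @ [u]) @ us))"
    by (rule Cons.IH)
  finally show ?case by simp
qed

lemma provable_eq_Fn_cong:
  "list_all2 (provable_eq Ax) ts us \<Longrightarrow> provable_eq Ax (Fn f ts) (Fn f us)"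
  using provable_eq_Fn_cong_append[where pre = "[]"] by simp

lemma provable_eq_PAax: "PAax \<subseteq> Ax \<Longrightarrow> ({}, {FEq s t}) \<in> PAax \<Longrightarrow> provable_eq Ax s t"
  unfolding provable_eq_def by (rule deriv.ax) auto

lemma provable_eq_PComp_numerals:
  assumes PA: "PAax \<subseteq> Ax"
    and f: "\<And>ns. provable_eq Ax (Fn f (map num ns)) (num (eval_pfun f ns))"
    and gs: "\<And>g ns. g \<in> set gs \<Longrightarrow> provable_eq Ax (Fn g (map num ns)) (num (eval_pfun g ns))"
  shows "provable_eq Ax (Fn (PComp f gs) (map num ns)) (num (eval_pfun (PComp f gs) ns))"
proof -
  let ?ms = "map (\<lambda>g. eval_pfun g ns) gs"
  have "provable_eq Ax (Fn (PComp f gs) (map num ns)) (Fn f (map (\<lambda>g. Fn g (map num ns)) gs))"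
    using PA by (rule provable_eq_PAax) (auto simp: PAax_def)
  also have "provable_eq Ax \<dots> (Fn f (map num ?ms))"
    by (rule provable_eq_Fn_cong) (auto simp: list_all2_conv_all_nth gs)
  also have "provable_eq Ax \<dots> (num (eval_pfun f ?ms))"
    by (rule f)
  finally show ?thesis by simp
qed

lemma provable_eq_PRec_numerals:
  assumes PA: "PAax \<subseteq> Ax"
    and f: "\<And>ns. provable_eq Ax (Fn f (map num ns)) (num (eval_pfun f ns))"
    and g: "\<And>ns. provable_eq Ax (Fn g (map num ns)) (num (eval_pfun g ns))"
  shows "provable_eq Ax (Fn (PRec f g) (map num ns)) (num (eval_pfun (PRec f g) ns))"
proof (cases ns)
  case Nil
  have "provable_eq Ax (Fn (PRec f g) []) (Fn f [])"
    using PA by (rule provable_eq_PAax) (auto simp: PAax_def)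
  also have "provable_eq Ax \<dots> (num (eval_pfun f []))"
    using f[of "[]"] by simp
  finally show ?thesis using Nil by simp
next
  case (Cons k ms)
  have "provable_eq Ax (Fn (PRec f g) (num k # map num ms)) (num (eval_pfun (PRec f g) (k # ms)))"
  proof (induction k)
    case 0
    have "provable_eq Ax (Fn (PRec f g) (zero # map num ms)) (Fn f (map num ms))"
      using PA by (rule provable_eq_PAax) (auto simp: PAax_def)
    also have "provable_eq Ax \<dots> (num (eval_pfun f ms))"
      by (rule f)
    finally show ?case by (simp add: zero_def)
  next
    case (Suc k)
    let ?r = "eval_pfun (PRec f g) (k # ms)"
    have "provable_eq Ax (Fn (PRec f g) (succ (num k) # map num ms))
        (Fn g (Fn (PRec f g) (num k # map num ms) # num k # map num ms))"
      using PA by (rule provable_eq_PAax) (auto simp: PAax_def)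
    also have "provable_eq Ax \<dots> (Fn g (map num (?r # k # ms)))"
      using Suc.IH by (intro provable_eq_Fn_cong) (simp add: provable_eq_refl list_all2_refl)
    also have "provable_eq Ax \<dots> (num (eval_pfun g (?r # k # ms)))"
      by (rule g)
    finally show ?case by simp
  qed
  then show ?thesis using Cons by simp
qed

lemma provable_eq_eval_pfun:
  "PAax \<subseteq> Ax \<Longrightarrow> provable_eq Ax (Fn f (map num ns)) (num (eval_pfun f ns))"
proof (induction f arbitrary: ns)
  case PZ
  then show ?case by (rule provable_eq_PAax) (auto simp: PAax_def)
next
  case PS
  consider "ns = []" | n where "ns = [n]" | n m ms where "ns = n # m # ms"
    by (metis list.exhaust)
  then show ?case
  proof cases
    case 1
    then show ?thesis using PS by (intro provable_eq_PAax) (auto simp: PAax_def succ_def)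
  next
    case 2
    then show ?thesis by (simp add: succ_def provable_eq_refl)
  next
    case 3
    then show ?thesis using PS by (intro provable_eq_PAax) (auto simp: PAax_def succ_def)
  qed
next
  case (PProj i)
  then show ?case
    by (intro provable_eq_PAax) (auto simp: PAax_def zero_def)
next
  case (PComp f gs)
  then show ?case by (intro provable_eq_PComp_numerals)
next
  case (PRec f g)
  then show ?case by (intro provable_eq_PRec_numerals)
qed

lemma provable_eq_num_evalt:
  "PAax \<subseteq> Ax \<Longrightarrow> fvt t = {} \<Longrightarrow> provable_eq Ax t (num (evalt e t))"
proof (induction t)
  case (V n)
  then show ?case by simp
next
  case (Fn f ts)
  have "provable_eq Ax (Fn f ts) (Fn f (map num (map (evalt e) ts)))"
    by (rule provable_eq_Fn_cong) (use Fn in \<open>auto simp: list_all2_conv_all_nth\<close>)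
  also have "provable_eq Ax \<dots> (num (evalt e (Fn f ts)))"
    using provable_eq_eval_pfun[OF Fn.prems(1), of f "map (evalt e) ts"] by simp
  finally show ?case .
qed

lemma provable_eq_closed:
  assumes "PAax \<subseteq> Ax" and "fvt s = {}" and "fvt t = {}" and "evalt e s = evalt e t"
  shows "provable_eq Ax s t"
proof -
  have "provable_eq Ax s (num (evalt e t))"
    using provable_eq_num_evalt[OF assms(1,2), where e = e] assms(4) by simp
  also have "provable_eq Ax \<dots> t"
    by (rule provable_eq_sym[OF provable_eq_num_evalt[OF assms(1,3)]])
  finally show ?thesis .
qed

lemma deriv_FT_replace_closed:
  assumes "deriv Ax G (insert (FT u) D)" and "PAax \<subseteq> Ax"
    and "fvt s = {}" and "fvt u = {}" and "evalt e s = evalt e u"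
  shows "deriv Ax G (insert (FT s) D)"
  using deriv_replace[of Ax G 0 u "FT (V 0)" D s] assms provable_eq_closed[of Ax s u e]
  by (simp add: inst1_def)

abbreviation Sent :: "coding \<Rightarrow> trm \<Rightarrow> fml" where
  "Sent C u \<equiv> FEq (Fn (c_sent C) [u]) (num 1)"

definition denotes_sentence :: "trm \<Rightarrow> bool" where
  "denotes_sentence u \<longleftrightarrow>
     fvt u = {} \<and> is_fcode (evalt (\<lambda>_. 0) u) \<and> sentence (dec_f (evalt (\<lambda>_. 0) u))"

lemma denotes_sentence_quote: "sentence a \<Longrightarrow> denotes_sentence (quote a)"
  by (simp add: denotes_sentence_def)

lemma denotes_sentence_c_neg:
  "good_coding C \<Longrightarrow> denotes_sentence u \<Longrightarrow> denotes_sentence (Fn (c_neg C) [u])"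
  by (auto simp: denotes_sentence_def good_coding_def negF_def sentence_def)

lemma TP_axiom:
  assumes "(G, D) \<in> tp_inst C Vl B a b 0 1" and "fvt a = {}" and "fvt b = {}"
    and "finite G" and "finite D"
  shows "TP C Vl B G D"
proof (rule deriv.ax)
  have "tp_inst C Vl B a b 0 1 \<in> {tp_inst C Vl B a b z w | a b z w.
      z \<noteq> w \<and> z \<notin> fvt a \<union> fvt b \<and> w \<notin> fvt a \<union> fvt b}"
    by (intro CollectI exI[where x = a] exI[where x = b] exI[where x = 0] exI[where x = 1])
      (simp add: assms(2,3))
  with assms(1) show "(G, D) \<in> PAax \<union> TPax C Vl B"
    unfolding TPax_def by blast
qed (use assms in auto)

lemma TP_Sent:
  assumes "good_coding C" and "denotes_sentence u"
  shows "TP C Vl B {} {Sent C u}"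
  using assms by (intro provable_eq_closed[where e = "\<lambda>_. 0", unfolded provable_eq_def])
    (auto simp: denotes_sentence_def good_coding_def sentF_def zero_def succ_def)

lemma TP_discharge_Sent:
  "good_coding C \<Longrightarrow> denotes_sentence u \<Longrightarrow> TP C Vl B (insert (Sent C u) G) D \<Longrightarrow> TP C Vl B G D"
  using deriv_cut_valid TP_Sent by blast

lemma TP_P_imp_T_P:
  assumes "good_coding C" and "denotes_sentence u"
  shows "TP C Vl B {FP u} {FT (Fn (c_P C) [u])}"
proof (rule TP_discharge_Sent[OF assms])
  have "TP C Vl B {FP u, Sent C u} {FT (Fn (c_P C) [u])}"
    by (rule TP_axiom[where a = u and b = u])
      (use assms(2) in \<open>simp_all add: denotes_sentence_def tp_inst_def Let_def iffs_def\<close>)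
  then show "TP C Vl B (insert (Sent C u) {FP u}) {FT (Fn (c_P C) [u])}"
    by (simp add: insert_commute)
qed

lemma TP_not_P_imp_T_not_P:
  assumes "good_coding C" and "denotes_sentence u"
  shows "TP C Vl B {FNP u} {FT (Fn (c_neg C) [Fn (c_P C) [u]])}"
proof (rule TP_discharge_Sent[OF assms])
  have "TP C Vl B {FNP u, Sent C u} {FT (Fn (c_neg C) [Fn (c_P C) [u]])}"
    by (rule TP_axiom[where a = u and b = u])
      (use assms(2) in \<open>simp_all add: denotes_sentence_def tp_inst_def Let_def iffs_def\<close>)
  then show "TP C Vl B (insert (Sent C u) {FNP u}) {FT (Fn (c_neg C) [Fn (c_P C) [u]])}"
    by (simp add: insert_commute)
qed

lemma TP_T_disj:
  assumes "good_coding C" and "denotes_sentence a" and "denotes_sentence b"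
  shows "TP C Vl B {FOr (FT a) (FT b)} {FT (Fn (c_disj C) [a, b])}"
proof (rule TP_discharge_Sent[OF assms(1,2)], rule TP_discharge_Sent[OF assms(1,3)])
  have "TP C Vl B {FOr (FT a) (FT b), Sent C a, Sent C b} {FT (Fn (c_disj C) [a, b])}"
    by (rule TP_axiom[where a = a and b = b])
      (use assms(2,3) in \<open>simp_all add: denotes_sentence_def tp_inst_def Let_def iffs_def\<close>)
  then show "TP C Vl B (insert (Sent C b) (insert (Sent C a) {FOr (FT a) (FT b)}))
      {FT (Fn (c_disj C) [a, b])}"
    by (simp add: insert_commute)
qed

lemma TP_T_excluded_middle_imp_not_P:
  assumes "good_coding C" and "denotes_sentence u"
  shows "TP C Vl B {FT (Fn (c_disj C) [u, Fn (c_neg C) [u]])} {FNP u}"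
proof (rule TP_discharge_Sent[OF assms])
  show "TP C Vl B {Sent C u, FT (Fn (c_disj C) [u, Fn (c_neg C) [u]])} {FNP u}"
    by (rule TP_axiom[where a = u and b = u])
      (use assms(2) in \<open>simp_all add: denotes_sentence_def tp_inst_def Let_def iffs_def\<close>)
qed

lemma TP_T_imp_not_P:
  assumes "good_coding C" and "denotes_sentence u"
  shows "TP C Vl B {FT u} {FNP u}"
proof -
  let ?v = "Fn (c_neg C) [u]"
  have "TP C Vl B {FT u} {FOr (FT u) (FT ?v)}"
    by (rule deriv.orR1) (rule deriv.init)
  moreover have "TP C Vl B {FOr (FT u) (FT ?v)} {FT (Fn (c_disj C) [u, ?v])}"
    by (rule TP_T_disj[OF assms denotes_sentence_c_neg[OF assms]])
  moreover have "TP C Vl B {FT (Fn (c_disj C) [u, ?v])} {FNP u}"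
    by (rule TP_T_excluded_middle_imp_not_P[OF assms])
  ultimately show ?thesis by (blast intro: deriv_trans)
qed

lemma TP_T_imp_not_P_quote:
  assumes "TP C Vl B G {FT u}" and "good_coding C" and "sentence a"
    and "fvt u = {}" and "evalt (\<lambda>_. 0) u = code_fml a"
  shows "TP C Vl B G {FNP (quote a)}"
proof (rule deriv_trans)
  show "TP C Vl B G {FT (quote a)}"
    by (rule deriv_FT_replace_closed[OF assms(1), where e = "\<lambda>_. 0", simplified])
      (use assms(4,5) in auto)
  show "TP C Vl B {FT (quote a)} {FNP (quote a)}"
    by (rule TP_T_imp_not_P[OF assms(2) denotes_sentence_quote[OF assms(3)]])
qed

lemma TP_T_excluded_middle_quote_imp_not_P:
  assumes "good_coding C" and "sentence a"
  shows "TP C Vl B {FT (quote (FOr a (neg a)))} {FNP (quote a)}"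
proof (rule deriv_trans)
  let ?q = "quote a"
  show "TP C Vl B {FT (quote (FOr a (neg a)))} {FT (Fn (c_disj C) [?q, Fn (c_neg C) [?q]])}"
    by (rule deriv_FT_replace_closed[OF deriv.init, where e = "\<lambda>_. 0", simplified])
      (use assms(1) in \<open>simp_all add: good_coding_def\<close>)
  show "TP C Vl B {FT (Fn (c_disj C) [?q, Fn (c_neg C) [?q]])} {FNP ?q}"
    by (rule TP_T_excluded_middle_imp_not_P[OF assms(1) denotes_sentence_quote[OF assms(2)]])
qed

lemma TP_P_right_imp_T_excluded_middle_left:
  assumes "good_coding C" and "sentence a" and "TP C Vl B G (insert (FP (quote a)) D)"
  shows "TP C Vl B (insert (FT (quote (FOr a (neg a)))) G) D"
proof -
  have "TP C Vl B (insert (FNP (quote a)) G) D"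
    using deriv.negL[OF assms(3)] by simp
  then show ?thesis
    by (rule deriv_cut_subset[OF TP_T_excluded_middle_quote_imp_not_P[OF assms(1,2)]])
      (use deriv_finite[OF assms(3)] in auto)
qed

lemma TP_P_literals_not_paradoxical:
  assumes "good_coding C" and "denotes_sentence t"
  shows "TP C Vl B {FP t} {FNP (quote (FP (num (evalt (\<lambda>_. 0) t))))}"
    and "TP C Vl B {FNP t} {FNP (quote (neg (FP (num (evalt (\<lambda>_. 0) t)))))}"
proof -
  have "eval_pfun (c_P C) [n] = PF n" "eval_pfun (c_neg C) [n] = negF n" for n
    using assms(1) by (simp_all add: good_coding_def)
  moreover have "fvt t = {}"
    using assms(2) by (simp add: denotes_sentence_def)
  ultimately show "TP C Vl B {FP t} {FNP (quote (FP (num (evalt (\<lambda>_. 0) t))))}"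
    and "TP C Vl B {FNP t} {FNP (quote (neg (FP (num (evalt (\<lambda>_. 0) t)))))}"
    by (auto intro!: TP_T_imp_not_P_quote[OF TP_P_imp_T_P[OF assms] assms(1)]
        TP_T_imp_not_P_quote[OF TP_not_P_imp_T_not_P[OF assms] assms(1)]
        simp: sentence_def PF_def simp del: code_fml.simps)
qed

theorem mainTheorem11:
  fixes C :: coding and Vl B :: fml
  assumes "good_coding C" and "defines_val Vl" and "defines_BP B"
  shows "(\<forall>\<phi> \<Gamma> \<Delta>. sentence \<phi> \<and> finite \<Gamma> \<and> finite \<Delta> \<and> (\<forall>\<chi>\<in>\<Gamma> \<union> \<Delta>. sentence \<chi>)
            \<and> TP C Vl B \<Gamma> (insert (FP (quote \<phi>)) \<Delta>)
          \<longrightarrow> TP C Vl B (insert (FT (quote (FOr \<phi> (neg \<phi>)))) \<Gamma>) \<Delta>)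
       \<and> (\<forall>t. fvt t = {} \<and> is_fcode (evalt (\<lambda>_. 0) t) \<and> sentence (dec_f (evalt (\<lambda>_. 0) t))
          \<longrightarrow> TP C Vl B {FP t} {FNP (quote (FP (num (evalt (\<lambda>_. 0) t))))}
            \<and> TP C Vl B {FNP t} {FNP (quote (neg (FP (num (evalt (\<lambda>_. 0) t)))))})"
proof (intro conjI allI impI)
  fix \<phi> \<Gamma> \<Delta>
  assume "sentence \<phi> \<and> finite \<Gamma> \<and> finite \<Delta> \<and> (\<forall>\<chi>\<in>\<Gamma> \<union> \<Delta>. sentence \<chi>)
    \<and> TP C Vl B \<Gamma> (insert (FP (quote \<phi>)) \<Delta>)"
  then show "TP C Vl B (insert (FT (quote (FOr \<phi> (neg \<phi>)))) \<Gamma>) \<Delta>"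
    by (blast intro: TP_P_right_imp_T_excluded_middle_left[OF assms(1)])
next
  fix t
  assume "fvt t = {} \<and> is_fcode (evalt (\<lambda>_. 0) t) \<and> sentence (dec_f (evalt (\<lambda>_. 0) t))"
  then have "denotes_sentence t"
    unfolding denotes_sentence_def .
  from TP_P_literals_not_paradoxical[OF assms(1) this]
  show "TP C Vl B {FP t} {FNP (quote (FP (num (evalt (\<lambda>_. 0) t))))}"
    and "TP C Vl B {FNP t} {FNP (quote (neg (FP (num (evalt (\<lambda>_. 0) t)))))}" .
qed

end
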